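(* Let $f(z)=\sum_{j\ge0}\binom{2j}{j}\left(\sum_{k=0}^{j}\binom{j}{k}^2\binom{j+k}{k}\binom{2k}{j}\right)z^j\in1+z\mathbb{Z}[[z]]$. Then for every prime $p$ one has $\Lambda_p(f_{|p})=f_{|p}$, and there is a finite set $\mathcal{J}$ of primes such that $f\in\mathcal{L}(\mathcal{P}\setminus\mathcal{J})$, where $\mathcal{P}$ is the set of all primes.
   Context: For a prime $p$, $\mathbb{Z}_{(p)}$ is the localization of $\mathbb{Z}$ at $(p)$; for $f=\sum a(n)z^n\in\mathbb{Z}_{(p)}[[z]]$, $f_{|p}(z)=\sum (a(n)\bmod p)z^n$; $\Lambda_p(\sum a(n)z^n)=\sum a(np)z^n$. The height of a rational function $P/Q$ with $P,Q$ coprime polynomials is $\max(\deg P,\deg Q)$. For an infinite set $\mathcal{S}$ of primes, $\mathcal{L}(\mathcal{S})$ is the set of $f\in 1+z\mathbb{Q}[[z]]$ such that there is a constant $C>0$ independent of $p$ with: for every $p\in\mathcal{S}$, $f\in\mathbb{Z}_{(p)}[[z]]$, and there exist an integer $l_p>0$ and $A_p\in\mathbb{F}_p(z)\cap\mathbb{F}_p[[z]]$ with $f_{|p}(z)=A_p(z)f_{|p}(z^{p^{l_p}})$ and height of $A_p$ at most $Cp^{l_p}$. *)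

theory Defs
  imports "HOL-Computational_Algebra.Computational_Algebra"
begin

text \<open>Elements of F_p are represented by integers, reduction mod p by int mod.
  Power series / polynomials over F_p are represented by integer ones, compared
  after coefficientwise reduction mod p.\<close>

definition fps_red :: "nat \<Rightarrow> int fps \<Rightarrow> int fps" where
  "fps_red p F = Abs_fps (\<lambda>n. fps_nth F n mod int p)"

definition poly_red :: "nat \<Rightarrow> int poly \<Rightarrow> int poly" where
  "poly_red p P = map_poly (\<lambda>c. c mod int p) P"

definition Lambda_op :: "nat \<Rightarrow> 'a fps \<Rightarrow> 'a fps" where
  "Lambda_op p F = Abs_fps (\<lambda>n. fps_nth F (n * p))"

definition subst_pow :: "nat \<Rightarrow> 'a::zero fps \<Rightarrow> 'a fps" where
  "subst_pow q F = Abs_fps (\<lambda>n. if q dvd n then fps_nth F (n div q) else 0)"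

definition dvd_mod :: "nat \<Rightarrow> int poly \<Rightarrow> int poly \<Rightarrow> bool" where
  "dvd_mod p D P \<longleftrightarrow> (\<exists>R. poly_red p (D * R) = poly_red p P)"

definition unit_mod :: "nat \<Rightarrow> int poly \<Rightarrow> bool" where
  "unit_mod p D \<longleftrightarrow> poly_red p D \<noteq> 0 \<and> degree (poly_red p D) = 0"

definition coprime_mod :: "nat \<Rightarrow> int poly \<Rightarrow> int poly \<Rightarrow> bool" where
  "coprime_mod p P Q \<longleftrightarrow>
     (\<forall>D. dvd_mod p D P \<and> dvd_mod p D Q \<longrightarrow> unit_mod p D)"

text \<open>The class L(S), for series with integer coefficients (so membership in
  Z_(p)[[z]] is automatic).  A_p = P/Q with P, Q coprime in F_p[z], Q nonzero,
  A_p lying in F_p[[z]] (witnessed by the series A with Q*A = P in F_p[[z]]),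
  and height(A_p) = max(deg P, deg Q).\<close>
definition in_L :: "nat set \<Rightarrow> int fps \<Rightarrow> bool" where
  "in_L S f \<longleftrightarrow> fps_nth f 0 = 1 \<and>
     (\<exists>C::real. C > 0 \<and> (\<forall>p\<in>S. \<exists>l::nat. l > 0 \<and>
        (\<exists>P Q :: int poly. \<exists>A :: int fps.
           poly_red p Q \<noteq> 0 \<and> coprime_mod p P Q \<and>
           fps_red p (fps_of_poly Q * A) = fps_red p (fps_of_poly P) \<and>
           fps_red p f = fps_red p (A * subst_pow (p ^ l) f) \<and>
           real (max (degree (poly_red p P)) (degree (poly_red p Q))) \<le> C * real p ^ l)))"

definition coeff_a :: "nat \<Rightarrow> int" where
  "coeff_a j = int (2*j choose j) *
     (\<Sum>k=0..j. int ((j choose k)^2 * ((j+k) choose k) * ((2*k) choose j)))"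

definition f20 :: "int fps" where
  "f20 = Abs_fps coeff_a"

end

theory Submission
  imports Defs
begin

(*
  The coefficients a(j) satisfy the Lucas congruences a(n p + r) = a(n) a(r) (mod p) for
  every prime p and 0 <= r < p.  Write T(j, k) = C(j,k)^2 C(j+k,k) C(2k,j) for the summands.
  By Lucas's theorem every binomial factor splits over the base-p digits of j and k as long
  as adding the last digits of j and k causes no carry; if it does, both sides vanish modulo p.
  Hence T(n p + r, m p + s) = T(n, m) T(r, s) (mod p), and summing over k = m p + s digit by
  digit gives the congruence for the inner sum; C(2j, j) is treated in the same way.

  Taking r = 0 and using a(0) = 1 gives Lambda_p(f) = f modulo p.  Writing j = n p + r gives
  f = A_p(z) f(z^p) modulo p with the polynomial A_p(z) = sum_{r<p} a(r) z^r of height at most p,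
  so f lies in L of all primes with l_p = 1 and C = 1.
*)

section \<open>Lucas's theorem\<close>

lemma div_mod_Suc_digits:
  fixes p :: nat
  assumes "r < p"
  shows "Suc (n*p + r) div p = (if Suc r < p then n else Suc n)"
    and "Suc (n*p + r) mod p = (if Suc r < p then Suc r else 0)"
proof (atomize (full), cases "Suc r < p")
  case True
  have "Suc (n*p + r) = Suc r + n*p" by simp
  then show "Suc (n*p + r) div p = (if Suc r < p then n else Suc n) \<and>
    Suc (n*p + r) mod p = (if Suc r < p then Suc r else 0)"
    using True div_mult_self1[of p "Suc r" n] by (simp only:) simp
next
  case False
  then have "Suc (n*p + r) = Suc n * p" using assms by simp
  then show "Suc (n*p + r) div p = (if Suc r < p then n else Suc n) \<and>
    Suc (n*p + r) mod p = (if Suc r < p then Suc r else 0)"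
    using False assms by (simp only:) simp
qed

lemma lucas_pascal_step:
  fixes p :: nat
  assumes p: "prime p" and r: "r < p" and s: "s < p"
  defines "L \<equiv> \<lambda>N K. (N div p choose K div p) * (N mod p choose K mod p)"
  shows "L (Suc (n*p + r)) (Suc (m*p + s)) mod p
       = (L (n*p + r) (m*p + s) + L (n*p + r) (Suc (m*p + s))) mod p"
proof -
  have digits: "(n*p + r) div p = n" "(n*p + r) mod p = r" "(m*p + s) div p = m" "(m*p + s) mod p = s"
    using r s by simp_all
  note Suc_digits = div_mod_Suc_digits[OF r, of n] div_mod_Suc_digits[OF s, of m]
  show ?thesis
  proof (cases "Suc r = p \<and> Suc s < p")
    case True
    then have "L (Suc (n*p + r)) (Suc (m*p + s)) = 0"
      unfolding L_def Suc_digits by simp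
    moreover have "p dvd (r choose s) + (r choose Suc s)"
    proof -
      have "p dvd (p choose Suc s)" using dvd_choose_prime[of "Suc s" p] p True by simp
      moreover have "p = Suc r" using True by simp
      ultimately show ?thesis by simp
    qed
    ultimately show ?thesis
      unfolding L_def digits Suc_digits using True
      by (simp add: distrib_left[symmetric] del: binomial_Suc_Suc)
  next
    case False
    then consider "Suc r < p" | "\<not> Suc r < p" "\<not> Suc s < p" using r by linarith
    then have "L (Suc (n*p + r)) (Suc (m*p + s)) = L (n*p + r) (m*p + s) + L (n*p + r) (Suc (m*p + s))"
    proof cases
      case 1
      then show ?thesis
        unfolding L_def digits Suc_digits using s
        by (cases "Suc s < p") (auto simp: algebra_simps binomial_eq_0)
    next
      case 2
      then have "r = s" using r s by simp
      with 2 show ?thesis unfolding L_def digits Suc_digits by simp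
    qed
    then show ?thesis by simp
  qed
qed

theorem lucas_congruence:
  fixes p :: nat
  assumes p: "prime p"
  shows "(N choose K) mod p = ((N div p choose K div p) * (N mod p choose K mod p)) mod p"
proof (induction N arbitrary: K)
  case 0
  have "K div p \<noteq> 0 \<or> K mod p \<noteq> 0" if "K \<noteq> 0"
    using that div_mult_mod_eq[of K p] by (metis add_0 mult_0)
  then show ?case by (cases "K = 0") (auto simp: binomial_eq_0)
next
  case (Suc N)
  show ?case
  proof (cases K)
    case (Suc K')
    have "p > 0" using p prime_gt_0_nat by blast
    define n r m s where "n = N div p" and "r = N mod p" and "m = K' div p" and "s = K' mod p"
    have N: "N = n*p + r" and K': "K' = m*p + s" and "r < p" "s < p"
      using \<open>p > 0\<close> by (simp_all add: n_def r_def m_def s_def)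
    have "(Suc N choose K) mod p = ((N choose K') mod p + (N choose Suc K') mod p) mod p"
      using Suc by (simp add: mod_add_eq)
    also have "\<dots> = ((N div p choose K' div p) * (N mod p choose K' mod p)
        + (N div p choose Suc K' div p) * (N mod p choose Suc K' mod p)) mod p"
      using Suc.IH[of K'] Suc.IH[of "Suc K'"] by (simp add: mod_add_eq)
    also have "\<dots> = ((Suc N div p choose K div p) * (Suc N mod p choose K mod p)) mod p"
      using lucas_pascal_step[OF p \<open>r < p\<close> \<open>s < p\<close>, of n m] by (simp add: N K' Suc)
    finally show ?thesis .
  qed simp
qed

corollary binomial_digits_mod:
  fixes p :: nat
  assumes "prime p" "r < p" "s < p"
  shows "(n*p + r choose m*p + s) mod p = ((n choose m) * (r choose s)) mod p"
  using lucas_congruence[OF \<open>prime p\<close>, of "n*p + r" "m*p + s"] assms by simp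

lemma prime_dvd_choose_carry:
  fixes p :: nat
  assumes "prime p" "r < p" "s < p" "p \<le> r + s"
  shows "p dvd (n*p + (r + s) choose m*p + s)"
proof -
  have "n*p + (r + s) = Suc n * p + (r + s - p)" using assms(4) by simp
  moreover have "r + s - p < s" "r + s - p < p" using assms(2-4) by linarith+
  ultimately show ?thesis
    using binomial_digits_mod[OF assms(1) \<open>r + s - p < p\<close> \<open>s < p\<close>, of "Suc n" m]
    by (simp add: binomial_eq_0 dvd_eq_mod_eq_0)
qed

section \<open>Sequences with the Lucas property\<close>

definition lucas_property :: "nat \<Rightarrow> (nat \<Rightarrow> 'a::euclidean_semiring_cancel) \<Rightarrow> bool" where
  "lucas_property p a \<longleftrightarrow> (\<forall>n r. r < p \<longrightarrow> a (n*p + r) mod of_nat p = (a n * a r) mod of_nat p)"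

lemma lucas_propertyI:
  "(\<And>n r. r < p \<Longrightarrow> a (n*p + r) mod of_nat p = (a n * a r) mod of_nat p) \<Longrightarrow> lucas_property p a"
  unfolding lucas_property_def by blast

lemma lucas_propertyD:
  "lucas_property p a \<Longrightarrow> r < p \<Longrightarrow> a (n*p + r) mod of_nat p = (a n * a r) mod of_nat p"
  unfolding lucas_property_def by blast

lemma lucas_property_mult:
  assumes "lucas_property p a" "lucas_property p b"
  shows "lucas_property p (\<lambda>j. a j * b j)"
proof (rule lucas_propertyI)
  fix n r :: nat assume "r < p"
  have "(a (n*p + r) * b (n*p + r)) mod of_nat p = ((a n * a r) * (b n * b r)) mod of_nat p"
    using lucas_propertyD[OF assms(1) \<open>r < p\<close>] lucas_propertyD[OF assms(2) \<open>r < p\<close>]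
    by (rule mod_mult_cong)
  then show "(a (n*p + r) * b (n*p + r)) mod of_nat p = (a n * b n * (a r * b r)) mod of_nat p"
    by (simp add: ac_simps)
qed

lemma lucas_property_of_nat:
  "lucas_property p a \<Longrightarrow> lucas_property p (\<lambda>j. int (a j))"
  unfolding lucas_property_def by (metis of_nat_mod of_nat_mult of_nat_id)

lemma lucas_property_central_binomial:
  fixes p :: nat
  assumes p: "prime p"
  shows "lucas_property p (\<lambda>j. 2*j choose j)"
proof (rule lucas_propertyI)
  fix n r :: nat assume r: "r < p"
  have double: "2*(n*p + r) = (2*n)*p + (r + r)" by (simp add: algebra_simps)
  show "(2*(n*p + r) choose n*p + r) mod of_nat p = ((2*n choose n) * (2*r choose r)) mod of_nat p"
  proof (cases "r + r < p")
    case True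
    have "(2*(n*p + r) choose n*p + r) mod p = ((2*n choose n) * (r + r choose r)) mod p"
      unfolding double by (rule binomial_digits_mod[OF p True r])
    then show ?thesis by (simp add: mult_2)
  next
    case False
    then have "p dvd (2*(n*p + r) choose n*p + r)"
      unfolding double by (intro prime_dvd_choose_carry[OF p r r]) simp
    moreover have "p dvd (2*r choose r)"
      using prime_dvd_choose_carry[OF p r r, of 0 0] False by (simp add: mult_2)
    ultimately show ?thesis by simp
  qed
qed

lemma mod_sum_cong:
  fixes f g :: "'b \<Rightarrow> 'a::euclidean_semiring_cancel"
  assumes "\<And>i. i \<in> A \<Longrightarrow> f i mod m = g i mod m"
  shows "sum f A mod m = sum g A mod m"
  by (metis (no_types, lifting) assms mod_sum_eq sum.cong)

lemma sum_upto_eq_sum_lessThan: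
  fixes T :: "nat \<Rightarrow> nat \<Rightarrow> 'a::comm_monoid_add"
  assumes "\<And>k. j < k \<Longrightarrow> T j k = 0" "j < L"
  shows "(\<Sum>k=0..j. T j k) = (\<Sum>k<L. T j k)"
  by (rule sum.mono_neutral_left) (use assms in auto)

lemma lucas_property_sum_kernel:
  fixes T :: "nat \<Rightarrow> nat \<Rightarrow> nat"
  assumes T_digits: "\<And>n m r s. r < p \<Longrightarrow> s < p \<Longrightarrow> T (n*p + r) (m*p + s) mod p = (T n m * T r s) mod p"
    and T_vanish: "\<And>j k. j < k \<Longrightarrow> T j k = 0"
  shows "lucas_property p (\<lambda>j. \<Sum>k=0..j. T j k)"
proof (rule lucas_propertyI)
  fix n r :: nat assume r: "r < p"
  let ?j = "n*p + r"
  have "(\<Sum>k=0..?j. T ?j k) = (\<Sum>k<Suc n * p. T ?j k)"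
    using r by (intro sum_upto_eq_sum_lessThan T_vanish) auto
  also have "\<dots> = (\<Sum>m<Suc n. \<Sum>k\<in>{m*p..<m*p + p}. T ?j k)"
    by (rule sum.nat_group[symmetric])
  also have "\<dots> = (\<Sum>m<Suc n. \<Sum>s<p. T ?j (m*p + s))"
  proof (rule sum.cong[OF refl])
    fix m
    have "(\<Sum>k\<in>{0 + m*p..<p + m*p}. T ?j k) = (\<Sum>s\<in>{0..<p}. T ?j (s + m*p))"
      by (rule sum.shift_bounds_nat_ivl)
    then show "(\<Sum>k\<in>{m*p..<m*p + p}. T ?j k) = (\<Sum>s<p. T ?j (m*p + s))"
      by (simp add: atLeast0LessThan add.commute)
  qed
  finally have "(\<Sum>k=0..?j. T ?j k) mod p = (\<Sum>m<Suc n. \<Sum>s<p. T ?j (m*p + s)) mod p"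
    by simp
  also have "\<dots> = (\<Sum>m<Suc n. \<Sum>s<p. T n m * T r s) mod p"
    using T_digits[OF r] by (intro mod_sum_cong) (auto intro!: mod_sum_cong)
  also have "(\<Sum>m<Suc n. \<Sum>s<p. T n m * T r s) = (\<Sum>m=0..n. T n m) * (\<Sum>s=0..r. T r s)"
  proof -
    have "(\<Sum>m=0..n. T n m) = (\<Sum>m<Suc n. T n m)"
      by (rule sum_upto_eq_sum_lessThan) (simp_all add: T_vanish)
    moreover have "(\<Sum>s=0..r. T r s) = (\<Sum>s<p. T r s)"
      by (rule sum_upto_eq_sum_lessThan) (simp_all add: T_vanish r)
    ultimately show ?thesis by (simp only: sum_product)
  qed
  finally show "(\<Sum>k=0..?j. T ?j k) mod of_nat p = ((\<Sum>k=0..n. T n k) * (\<Sum>k=0..r. T r k)) mod of_nat p"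
    by simp
qed

section \<open>The Lucas property of the coefficients\<close>

definition coeff_a_summand :: "nat \<Rightarrow> nat \<Rightarrow> nat" where
  "coeff_a_summand j k = (j choose k)^2 * ((j + k) choose k) * ((2*k) choose j)"

lemma coeff_a_summand_digits:
  fixes p :: nat
  assumes p: "prime p" and r: "r < p" and s: "s < p"
  shows "coeff_a_summand (n*p + r) (m*p + s) mod p = (coeff_a_summand n m * coeff_a_summand r s) mod p"
proof -
  have sum_digits: "(n*p + r) + (m*p + s) = (n + m)*p + (r + s)" by (simp add: algebra_simps)
  consider "r < s" | "s \<le> r" "r + s < p" | "p \<le> r + s" by linarith
  then show ?thesis
  proof cases
    case 1
    then have "p dvd (n*p + r choose m*p + s)"
      using binomial_digits_mod[OF p r s, of n m] by (simp add: binomial_eq_0 dvd_eq_mod_eq_0)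
    moreover have "(n*p + r choose m*p + s) dvd coeff_a_summand (n*p + r) (m*p + s)"
      unfolding coeff_a_summand_def power2_eq_square mult.assoc by (rule dvd_triv_left)
    ultimately have "p dvd coeff_a_summand (n*p + r) (m*p + s)" by (rule dvd_trans)
    moreover have "coeff_a_summand r s = 0" using 1 by (simp add: coeff_a_summand_def)
    ultimately show ?thesis by simp
  next
    case 2
    have double: "2*(m*p + s) = (2*m)*p + 2*s" by (simp add: algebra_simps)
    have lower: "(n*p + r choose m*p + s) mod p = ((n choose m) * (r choose s)) mod p"
      by (rule binomial_digits_mod[OF p r s])
    have "((n*p + r) + (m*p + s) choose m*p + s) mod p = ((n + m choose m) * (r + s choose s)) mod p"
      unfolding sum_digits by (rule binomial_digits_mod[OF p \<open>r + s < p\<close> s])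
    moreover have "(2*(m*p + s) choose n*p + r) mod p = ((2*m choose n) * (2*s choose r)) mod p"
      unfolding double using 2 by (intro binomial_digits_mod[OF p _ r]) simp
    moreover have "(n*p + r choose m*p + s)^2 mod p = ((n choose m) * (r choose s))^2 mod p"
      by (metis lower power_mod)
    ultimately have "coeff_a_summand (n*p + r) (m*p + s) mod p
      = (((n choose m) * (r choose s))^2 * ((n + m choose m) * (r + s choose s))
          * ((2*m choose n) * (2*s choose r))) mod p"
      unfolding coeff_a_summand_def by (intro mod_mult_cong)
    also have "\<dots> = (coeff_a_summand n m * coeff_a_summand r s) mod p"
      unfolding coeff_a_summand_def power_mult_distrib by (simp only: ac_simps)
    finally show ?thesis .
  next
    case 3
    have "p dvd ((n*p + r) + (m*p + s) choose m*p + s)"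
      unfolding sum_digits by (rule prime_dvd_choose_carry[OF p r s 3])
    then have "p dvd coeff_a_summand (n*p + r) (m*p + s)" by (simp add: coeff_a_summand_def)
    moreover have "p dvd (r + s choose s)"
      using prime_dvd_choose_carry[OF p r s 3, of 0 0] by simp
    then have "p dvd coeff_a_summand r s" by (simp add: coeff_a_summand_def)
    ultimately show ?thesis by simp
  qed
qed

lemma coeff_a_eq_summands: "coeff_a j = int ((2*j choose j) * (\<Sum>k=0..j. coeff_a_summand j k))"
  by (simp add: coeff_a_def coeff_a_summand_def of_nat_sum)

lemma lucas_property_coeff_a:
  assumes "prime p"
  shows "lucas_property p coeff_a"
proof -
  have sums: "lucas_property p (\<lambda>j. \<Sum>k=0..j. coeff_a_summand j k)"
    by (rule lucas_property_sum_kernel)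
      (fact coeff_a_summand_digits[OF assms], simp add: coeff_a_summand_def binomial_eq_0)
  have "coeff_a = (\<lambda>j. int ((2*j choose j) * (\<Sum>k=0..j. coeff_a_summand j k)))"
    by (simp add: fun_eq_iff coeff_a_eq_summands)
  then show ?thesis
    using lucas_property_of_nat[OF lucas_property_mult[OF lucas_property_central_binomial[OF assms] sums]]
    by simp
qed

section \<open>Power series with the Lucas property\<close>

lemma fps_red_Lambda_op_fixed:
  fixes a :: "nat \<Rightarrow> int"
  assumes "lucas_property p a" "a 0 = 1" "p > 0"
  shows "fps_red p (Lambda_op p (fps_red p (Abs_fps a))) = fps_red p (Abs_fps a)"
proof (rule fps_ext)
  fix n
  have "a (n*p + 0) mod int p = (a n * a 0) mod int p"
    using lucas_propertyD[OF assms(1) \<open>p > 0\<close>] by simp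
  then show "fps_red p (Lambda_op p (fps_red p (Abs_fps a))) $ n = fps_red p (Abs_fps a) $ n"
    by (simp add: fps_red_def Lambda_op_def assms(2))
qed

lemma fps_nth_poly_times_subst_pow:
  fixes P :: "'a::comm_semiring_1 poly"
  assumes "degree P < p"
  shows "(fps_of_poly P * subst_pow p F) $ n = coeff P (n mod p) * F $ (n div p)"
proof -
  have p: "p > 0" using assms by simp
  have summand_eq: "coeff P i * (if p dvd (n - i) then F $ ((n - i) div p) else 0)
      = (if i = n mod p then coeff P (n mod p) * F $ (n div p) else 0)" if "i \<le> n" for i
  proof (cases "i < p")
    case True
    with that have "p dvd (n - i) \<longleftrightarrow> i = n mod p"
      by (auto simp: mod_eq_dvd_iff_nat[symmetric])
    then show ?thesis by (auto simp: minus_mod_eq_div_mult p)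
  next
    case False
    then show ?thesis using assms by (auto simp: coeff_eq_0 p)
  qed
  have "(fps_of_poly P * subst_pow p F) $ n
      = (\<Sum>i=0..n. if i = n mod p then coeff P (n mod p) * F $ (n div p) else 0)"
    unfolding fps_mult_nth by (intro sum.cong refl) (simp add: subst_pow_def summand_eq)
  also have "\<dots> = coeff P (n mod p) * F $ (n div p)"
    by (simp add: sum.delta')
  finally show ?thesis .
qed

lemma fps_red_eq_poly_times_subst_pow:
  fixes a :: "nat \<Rightarrow> int"
  assumes "lucas_property p a" "p > 0"
  shows "fps_red p (Abs_fps a) = fps_red p (fps_of_poly (Poly (map a [0..<p])) * subst_pow p (Abs_fps a))"
proof (rule fps_ext)
  fix n
  have "degree (Poly (map a [0..<p])) \<le> p - 1"
    by (rule degree_le) (auto simp: nth_default_def)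
  then have "degree (Poly (map a [0..<p])) < p" using assms(2) by linarith
  then have "(fps_of_poly (Poly (map a [0..<p])) * subst_pow p (Abs_fps a)) $ n = a (n mod p) * a (n div p)"
    using assms(2) by (simp add: fps_nth_poly_times_subst_pow nth_default_def)
  moreover have "a n mod int p = (a (n div p) * a (n mod p)) mod int p"
    using lucas_propertyD[OF assms(1), of "n mod p" "n div p"] assms(2) by simp
  ultimately have "(fps_of_poly (Poly (map a [0..<p])) * subst_pow p (Abs_fps a)) $ n mod int p
      = a n mod int p"
    by (simp add: mult.commute)
  then show "fps_red p (Abs_fps a) $ n = fps_red p (fps_of_poly (Poly (map a [0..<p])) * subst_pow p (Abs_fps a)) $ n"
    by (simp add: fps_red_def)
qed

section \<open>Polynomials modulo a prime\<close>

lemma coeff_poly_red: "coeff (poly_red p D) n = coeff D n mod int p"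
  unfolding poly_red_def by (simp add: coeff_map_poly)

lemma poly_red_one: "p > 1 \<Longrightarrow> poly_red p 1 = 1"
  by (rule poly_eqI) (simp add: coeff_poly_red)

lemma poly_red_mult: "poly_red p (D * R) = poly_red p (poly_red p D * poly_red p R)"
proof (rule poly_eqI)
  fix n
  show "coeff (poly_red p (D * R)) n = coeff (poly_red p (poly_red p D * poly_red p R)) n"
    unfolding coeff_poly_red coeff_mult
    by (rule mod_sum_cong) (simp add: coeff_poly_red mod_mult_eq)
qed

lemma lead_coeff_poly_red_not_dvd:
  assumes "poly_red p D \<noteq> 0"
  shows "\<not> int p dvd lead_coeff (poly_red p D)"
proof
  assume "int p dvd lead_coeff (poly_red p D)"
  moreover have "lead_coeff (poly_red p D) mod int p = lead_coeff (poly_red p D)"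
    by (simp add: coeff_poly_red)
  ultimately show False using assms by simp
qed

lemma degree_poly_red_mult:
  assumes p: "prime p" and D: "poly_red p D \<noteq> 0" and R: "poly_red p R \<noteq> 0"
  shows "degree (poly_red p (D * R)) = degree (poly_red p D) + degree (poly_red p R)"
proof -
  let ?D = "poly_red p D" and ?R = "poly_red p R"
  have "\<not> int p dvd lead_coeff ?D * lead_coeff ?R"
    using p lead_coeff_poly_red_not_dvd[OF D] lead_coeff_poly_red_not_dvd[OF R]
    by (simp add: prime_dvd_mult_iff)
  then have "coeff (poly_red p (?D * ?R)) (degree ?D + degree ?R) \<noteq> 0"
    by (simp add: coeff_poly_red coeff_mult_degree_sum dvd_eq_mod_eq_0)
  then have "degree ?D + degree ?R \<le> degree (poly_red p (?D * ?R))"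
    by (rule le_degree)
  moreover have "degree (poly_red p (?D * ?R)) \<le> degree ?D + degree ?R"
    unfolding poly_red_def using map_poly_degree_leq degree_mult_le order_trans by blast
  ultimately show ?thesis by (simp add: poly_red_mult[of p D R])
qed

lemma unit_mod_if_dvd_mod_one:
  assumes p: "prime p" and "dvd_mod p D 1"
  shows "unit_mod p D"
proof -
  have "poly_red p 1 = 1" using prime_gt_1_nat[OF p] by (rule poly_red_one)
  then obtain R where R: "poly_red p (D * R) = 1"
    using assms(2) unfolding dvd_mod_def by auto
  have nonzero: "poly_red p D \<noteq> 0" "poly_red p R \<noteq> 0"
    using R poly_red_mult[of p D R] by (auto simp: poly_red_def)
  then have "degree (poly_red p D) + degree (poly_red p R) = 0"
    using degree_poly_red_mult[OF p nonzero] R by simp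
  with nonzero show ?thesis by (simp add: unit_mod_def)
qed

lemma coprime_mod_one_right: "prime p \<Longrightarrow> coprime_mod p P 1"
  unfolding coprime_mod_def by (blast intro: unit_mod_if_dvd_mod_one)

lemma in_L_if_lucas_property:
  fixes a :: "nat \<Rightarrow> int"
  assumes "a 0 = 1" and lucas: "\<And>p. p \<in> S \<Longrightarrow> prime p \<and> lucas_property p a"
  shows "in_L S (Abs_fps a)"
  unfolding in_L_def
proof (intro conjI exI[of _ "1::real"] ballI)
  fix p assume "p \<in> S"
  then have p: "prime p" and "lucas_property p a" using lucas by blast+
  have "p > 1" using p prime_gt_1_nat by blast
  let ?P = "Poly (map a [0..<p])"
  have "degree (poly_red p ?P) \<le> degree ?P"
    unfolding poly_red_def by (rule map_poly_degree_leq)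
  also have "\<dots> \<le> p"
    using degree_Poly[of "map a [0..<p]"] by simp
  finally have "real (max (degree (poly_red p ?P)) (degree (poly_red p 1))) \<le> 1 * real p ^ 1"
    using \<open>p > 1\<close> by (simp add: poly_red_one)
  moreover have "poly_red p 1 \<noteq> 0" using \<open>p > 1\<close> by (simp add: poly_red_one)
  moreover have "fps_red p (Abs_fps a) = fps_red p (fps_of_poly ?P * subst_pow (p ^ 1) (Abs_fps a))"
    using fps_red_eq_poly_times_subst_pow[OF \<open>lucas_property p a\<close>] \<open>p > 1\<close> by simp
  moreover have "fps_red p (fps_of_poly 1 * fps_of_poly ?P) = fps_red p (fps_of_poly ?P)"
    by simp
  ultimately show "\<exists>l>0. \<exists>P Q A. poly_red p Q \<noteq> 0 \<and> coprime_mod p P Q \<and>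
      fps_red p (fps_of_poly Q * A) = fps_red p (fps_of_poly P) \<and>
      fps_red p (Abs_fps a) = fps_red p (A * subst_pow (p ^ l) (Abs_fps a)) \<and>
      real (max (degree (poly_red p P)) (degree (poly_red p Q))) \<le> 1 * real p ^ l"
    using coprime_mod_one_right[OF p, of ?P] zero_less_one by blast
qed (simp_all add: assms(1))

theorem mainTheorem20:
  shows "(\<forall>p::nat. prime p \<longrightarrow> fps_red p (Lambda_op p (fps_red p f20)) = fps_red p f20)
    \<and> (\<exists>J::nat set. finite J \<and> (\<forall>q\<in>J. prime q) \<and> in_L ({p. prime p} - J) f20)"
proof (intro conjI allI impI exI[of _ "{}"])
  have "coeff_a 0 = 1" by (simp add: coeff_a_def)
  then show "in_L ({p. prime p} - {}) f20"
    unfolding f20_def by (intro in_L_if_lucas_property) (auto intro: lucas_property_coeff_a)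
  fix p :: nat assume "prime p"
  then show "fps_red p (Lambda_op p (fps_red p f20)) = fps_red p f20"
    unfolding f20_def using \<open>coeff_a 0 = 1\<close>
    by (intro fps_red_Lambda_op_fixed lucas_property_coeff_a prime_gt_0_nat)
qed simp_all

end
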